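(* Let $k\ge 4$ be an integer, let $t$ be a positive integer divisible by $\operatorname{lcm}(2,3,\ldots,2k-1)$, and let $n$ be an integer with $k^2-k \le n \le 4k^2-10k+5$. Suppose $S$ is a $k$-bounded zero-sum sequence of length $|S| = t+n$ that is $t$-avoiding. Then there exist integers $\alpha>0$ and $\beta>0$ such that $v_\alpha(S) \ge \frac{k}{k+1}n$ and $v_{-\beta}(S) \ge \frac{k}{k+1}n$.
   Context: A sequence is a finite multiset of integers; $|S|$ is its length counted with multiplicity, $v_a(S)$ is the multiplicity of the integer $a$ in $S$, and a subsequence $T$ of $S$ is a sub-multiset. $S$ is zero-sum if the sum of its terms is $0$, and $k$-bounded if all terms lie in $[-k,k]$. A zero-sum sequence $S$ is $t$-avoiding if it has no zero-sum subsequence of length exactly $t$. *)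

theory Defs
  imports Complex_Main "HOL-Library.Multiset"
begin

definition zero_sum :: "int multiset \<Rightarrow> bool" where
  "zero_sum S \<longleftrightarrow> sum_mset S = 0"

definition bounded_seq :: "nat \<Rightarrow> int multiset \<Rightarrow> bool" where
  "bounded_seq k S \<longleftrightarrow> (\<forall>a \<in># S. - int k \<le> a \<and> a \<le> int k)"

definition avoiding :: "nat \<Rightarrow> int multiset \<Rightarrow> bool" where
  "avoiding t S \<longleftrightarrow> zero_sum S \<and>
     \<not> (\<exists>T. T \<subseteq># S \<and> size T = t \<and> zero_sum T)"

end

theory Submission
  imports Defs
begin

text \<open>
  If \<open>S\<close> contained \<open>n\<close> zeros, deleting them would leave a zero-sum subsequence of length
  \<open>t\<close>; so \<open>v(0) < n\<close>. Give each term \<open>x\<close> the weight \<open>x\<close>, plus \<open>1\<close> if \<open>x = 0\<close> and \<open>1 - x\<close>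
  if \<open>x < 0\<close>. Every weight is at least \<open>1\<close>, and since \<open>S\<close> is zero-sum the weights add up to
  \<open>v(0) + \<Sum>b=1..k. (1 + b) v(-b)\<close>. If every \<open>v(-b)\<close> were below \<open>m = k n / (k + 1)\<close>, then
  \<open>|S| \<le> v(0) + m k (k + 3) / 2\<close>; as \<open>t\<close> is a multiple of
  \<open>lcm(2, \<dots>, 2k - 1) \<ge> k (2k - 1) (2k - 3) (2k - 5)\<close>, the last term is at most \<open>t\<close>,
  contradicting \<open>v(0) < n\<close>. Applying this to \<open>-S\<close> gives \<open>\<alpha>\<close>.
\<close>

lemma sum_mset_eq_sum_count:
  fixes f :: "'a \<Rightarrow> 'b::comm_semiring_1"
  assumes "finite A" and "\<And>x. x \<in># M \<Longrightarrow> x \<notin> A \<Longrightarrow> f x = 0"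
  shows "(\<Sum>x\<in>#M. f x) = (\<Sum>a\<in>A. of_nat (count M a) * f a)"
  using assms(2)
proof (induction M)
  case empty
  then show ?case by simp
next
  case (add x M)
  have "(\<Sum>a\<in>A. of_nat (count (add_mset x M) a) * f a)
        = (\<Sum>a\<in>A. of_nat (count M a) * f a) + (\<Sum>a\<in>A. if a = x then f a else 0)"
    by (auto simp: sum.distrib[symmetric] algebra_simps intro!: sum.cong)
  also have "(\<Sum>a\<in>A. if a = x then f a else 0) = f x"
    using add.prems \<open>finite A\<close> by (cases "x \<in> A") simp_all
  finally show ?case using add by (simp add: add.commute)
qed

lemma count_image_mset_uminus:
  "count (image_mset uminus M) x = count M (- x)" for M :: "'a::group_add multiset"
  by (induction M) auto

lemma sum_mset_image_mset_uminus:
  "sum_mset (image_mset uminus M) = - sum_mset M" for M :: "'a::ab_group_add multiset"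
  by (induction M) auto

lemma size_le_count_zero_plus_negative_weight:
  fixes S :: "int multiset"
  assumes "zero_sum S" and "bounded_seq k S"
  shows "int (size S) \<le> int (count S 0) + (\<Sum>b=1..k. int (count S (- int b)) * (1 + int b))"
proof -
  define w :: "int \<Rightarrow> int" where "w x = (if x < 0 then 1 - x else 0)" for x
  have "int (size S) = (\<Sum>x\<in>#S. 1)"
    by (induction S) auto
  also have "\<dots> \<le> (\<Sum>x\<in>#S. x + (if x = 0 then 1 else 0) + w x)"
    by (rule sum_mset_mono) (simp add: w_def)
  also have "\<dots> = sum_mset S + int (count S 0) + (\<Sum>x\<in>#S. w x)"
    by (simp add: sum_mset.distrib sum_mset_delta)
  also have "(\<Sum>x\<in>#S. w x) = (\<Sum>a\<in>(\<lambda>b. - int b) ` {1..k}. int (count S a) * w a)"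
  proof (rule sum_mset_eq_sum_count)
    fix x assume x: "x \<in># S" and not_neg_weight: "x \<notin> (\<lambda>b. - int b) ` {1..k}"
    have "\<not> x < 0"
    proof
      assume "x < 0"
      moreover have "- int k \<le> x" using x assms(2) by (simp add: bounded_seq_def)
      ultimately have "nat (- x) \<in> {1..k}" and "x = - int (nat (- x))" by auto
      with not_neg_weight show False by blast
    qed
    then show "w x = 0" by (simp add: w_def)
  qed simp
  also have "\<dots> = (\<Sum>b=1..k. int (count S (- int b)) * (1 + int b))"
    by (subst sum.reindex) (auto simp: inj_on_def w_def)
  finally show ?thesis using assms(1) by (simp add: zero_sum_def)
qed

lemma count_zero_less_if_avoiding:
  assumes "avoiding t S" and "size S = t + n"
  shows "count S 0 < n"
proof (rule ccontr)
  assume "\<not> count S 0 < n"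
  then have "replicate_mset n 0 \<subseteq># S" by (simp add: subseteq_mset_def)
  then have "size (S - replicate_mset n 0) = t" and "zero_sum (S - replicate_mset n 0)"
    using assms by (simp_all add: size_Diff_submset sum_mset_diff avoiding_def zero_sum_def)
  then show False using assms(1) diff_subset_eq_self unfolding avoiding_def by blast
qed

lemma exists_frequent_negative:
  fixes S :: "int multiset" and m :: real
  assumes "zero_sum S" and "bounded_seq k S" and "count S 0 < n" and "size S = t + n"
    and "m * (real k * (real k + 3) / 2) \<le> real t"
  shows "\<exists>\<beta>>0. m \<le> real (count S (- \<beta>))"
proof (rule ccontr)
  assume none: "\<not> ?thesis"
  have rare: "real (count S (- int b)) \<le> m" if "b \<in> {1..k}" for b
  proof -
    have "0 < int b" using that by simp
    then show ?thesis using none by (auto simp: not_le intro: less_imp_le)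
  qed
  have "real (size S) \<le> real (count S 0) + (\<Sum>b=1..k. real (count S (- int b)) * (1 + real b))"
    using size_le_count_zero_plus_negative_weight[OF assms(1,2), THEN of_int_le_iff[where 'a=real, THEN iffD2]]
    by simp
  also have "\<dots> \<le> real (count S 0) + (\<Sum>b=1..k. m * (1 + real b))"
    using rare by (intro add_left_mono sum_mono mult_right_mono) auto
  also have "(\<Sum>b=1..k. m * (1 + real b)) = m * (real k + (\<Sum>b=1..k. real b))"
    by (simp add: sum_distrib_left[symmetric] sum.distrib)
  also have "\<dots> = m * (real k * (real k + 3) / 2)"
    using double_gauss_sum_from_Suc_0[of k, where ?'a = real] by (simp add: field_simps)
  finally show False using assms(3,4,5) by simp
qed

lemma coprime_add_power_two_left:
  fixes a :: nat assumes "odd a" shows "coprime (a + 2 ^ i) a"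
proof -
  have "coprime (2 ^ i) a" using assms by simp
  then show ?thesis by (simp add: coprime_iff_gcd_eq_1 add.commute[of a])
qed

lemma exists_power_of_two_between:
  fixes k :: nat assumes "1 \<le> k" obtains j where "k \<le> 2 ^ j" and "2 ^ j < 2 * k"
proof -
  define j where "j = (LEAST j. k \<le> (2::nat) ^ j)"
  have "k \<le> 2 ^ j" unfolding j_def by (rule LeastI[of _ k]) (simp add: less_imp_le)
  moreover have "2 ^ j < 2 * k"
  proof (cases j)
    case 0 with assms show ?thesis by simp
  next
    case (Suc i)
    then have "\<not> k \<le> 2 ^ i" unfolding j_def by (metis lessI not_less_Least)
    with Suc show ?thesis by simp
  qed
  ultimately show thesis by (rule that)
qed

lemma three_odds_times_k_le_Lcm:
  fixes k :: nat assumes "4 \<le> k"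
  shows "(2*k-5) * (2*k-3) * (2*k-1) * k \<le> Lcm {2..2*k-1}"
proof -
  define a where "a = 2*k-5"
  define L where "L = Lcm {2..2*k-1}"
  have a: "odd a" "2*k-3 = a + 2" "2*k-1 = a + 4" using assms by (auto simp: a_def)
  \<comment> \<open>\<open>a\<close>, \<open>a + 2\<close>, \<open>a + 4\<close> and the power of two in \<open>[k, 2k)\<close> are pairwise coprime members of \<open>{2..2k-1}\<close>\<close>
  obtain j where j: "k \<le> 2 ^ j" "2 ^ j < 2 * k"
    using exists_power_of_two_between[of k] assms by force
  have dvd: "a dvd L" "a + 2 dvd L" "a + 4 dvd L" "2 ^ j dvd L"
    using assms j by (auto intro!: dvd_Lcm simp: a_def L_def)
  have "coprime (a + 2) a" "coprime (a + 4) a"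
    using coprime_add_power_two_left[OF \<open>odd a\<close>, of 1] coprime_add_power_two_left[OF \<open>odd a\<close>, of 2]
    by simp_all
  moreover have "coprime (a + 4) (a + 2)"
  proof -
    have "coprime (a + 2 + 2 ^ 1) (a + 2)" using \<open>odd a\<close> by (intro coprime_add_power_two_left) simp
    then show ?thesis by (simp add: numeral_eq_Suc)
  qed
  ultimately have "a * (a + 2) * (a + 4) dvd L"
    using dvd by (metis divides_mult coprime_commute coprime_mult_left_iff)
  moreover have "coprime (a * (a + 2) * (a + 4)) (2 ^ j)" using \<open>odd a\<close> by simp
  ultimately have "a * (a + 2) * (a + 4) * 2 ^ j dvd L" using dvd(4) divides_mult by blast
  moreover have "L \<noteq> 0" by (simp add: L_def Lcm_0_iff_nat)
  ultimately have "a * (a + 2) * (a + 4) * 2 ^ j \<le> L" by (simp add: dvd_imp_le)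
  moreover have "a * (a + 2) * (a + 4) * k \<le> a * (a + 2) * (a + 4) * 2 ^ j" using j by simp
  moreover have "(2*k-5) * (2*k-3) * (2*k-1) * k = a * (a + 2) * (a + 4) * k"
    using a by (simp add: a_def)
  ultimately show ?thesis unfolding L_def by linarith
qed

lemma weight_times_n_le_odd_product:
  fixes k n :: nat
  assumes "4 \<le> k" and "n + 10*k \<le> 4*k^2 + 5"
  shows "k * (k + 3) * n \<le> 2 * (k + 1) * ((2*k-5) * (2*k-3) * (2*k-1))"
proof -
  obtain u where u: "k = u + 4" using assms(1) by (metis add.commute le_Suc_ex)
  have "k * (k + 3) * (n + 10*k) \<le> k * (k + 3) * (4*k^2 + 5)"
    using assms(2) by simp
  moreover have "k * (k + 3) * (4*k^2 + 5) \<le> 2 * (k + 1) * ((2*k-5) * (2*k-3) * (2*k-1)) + k * (k + 3) * (10*k)"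
  proof -
    \<comment> \<open>the right side minus the left side is \<open>12k\<^sup>4 - 58k\<^sup>3 + 45k\<^sup>2 + 47k - 30\<close>, positive for \<open>k \<ge> 4\<close>\<close>
    have "2*k-5 = 2*u+3" "2*k-3 = 2*u+5" "2*k-1 = 2*u+7" using u by auto
    then show ?thesis unfolding u by (simp add: algebra_simps power2_eq_square)
  qed
  ultimately show ?thesis by (simp add: add_mult_distrib2)
qed

lemma weighted_threshold_le:
  fixes k n t :: nat
  assumes "4 \<le> k" and "n + 10*k \<le> 4*k^2 + 5" and "Lcm {2..2*k-1} dvd t" and "0 < t"
  shows "real k / real (k + 1) * real n * (real k * (real k + 3) / 2) \<le> real t"
proof -
  have "k * (k * (k + 3) * n) \<le> 2 * (k + 1) * ((2*k-5) * (2*k-3) * (2*k-1) * k)"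
    using mult_le_mono2[OF weight_times_n_le_odd_product[OF assms(1,2)], of k]
    by (simp add: ac_simps)
  also have "\<dots> \<le> 2 * (k + 1) * t"
    using order_trans[OF three_odds_times_k_le_Lcm[OF assms(1)] dvd_imp_le[OF assms(3,4)]]
    by (rule mult_le_mono2)
  finally have "real (k * (k * (k + 3) * n)) \<le> real (2 * (k + 1) * t)"
    by (simp only: of_nat_le_iff)
  then show ?thesis by (simp add: field_simps)
qed

theorem lemma2p2:
  fixes k t n :: nat and S :: "int multiset"
  assumes "k \<ge> 4"
    and "t > 0"
    and "Lcm {2..2*k-1} dvd t"
    and "k^2 - k \<le> n" and "n + 10*k \<le> 4*k^2 + 5"
    and "zero_sum S" and "bounded_seq k S"
    and "size S = t + n"
    and "avoiding t S"
  shows "\<exists>\<alpha> \<beta> :: int. \<alpha> > 0 \<and> \<beta> > 0 \<and>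
           real (count S \<alpha>) \<ge> real k / real (k + 1) * real n \<and>
           real (count S (- \<beta>)) \<ge> real k / real (k + 1) * real n"
proof -
  define m where "m = real k / real (k + 1) * real n"
  have budget: "m * (real k * (real k + 3) / 2) \<le> real t"
    unfolding m_def using weighted_threshold_le[OF assms(1,5,3,2)] .
  have few_zeros: "count S 0 < n"
    using count_zero_less_if_avoiding[OF assms(9,8)] .
  obtain \<beta> where "\<beta> > 0" and "m \<le> real (count S (- \<beta>))"
    using exists_frequent_negative[OF assms(6,7) few_zeros assms(8) budget] by blast
  moreover obtain \<alpha> where "\<alpha> > 0" and "m \<le> real (count S \<alpha>)"
  proof -
    have "zero_sum (image_mset uminus S)"
      using assms(6) by (simp add: zero_sum_def sum_mset_image_mset_uminus)
    moreover have "bounded_seq k (image_mset uminus S)"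
      using assms(7) by (auto simp: bounded_seq_def)
    moreover have "count (image_mset uminus S) 0 < n"
      using few_zeros by (simp add: count_image_mset_uminus)
    moreover have "size (image_mset uminus S) = t + n"
      using assms(8) by simp
    ultimately obtain \<alpha> where "\<alpha> > 0" and "m \<le> real (count (image_mset uminus S) (- \<alpha>))"
      using exists_frequent_negative budget by blast
    then show thesis using that by (simp add: count_image_mset_uminus)
  qed
  ultimately show ?thesis unfolding m_def by blast
qed

end
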